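(* Let $q$ be a prime power, $n\ge2$, and let $r_1,r_2$ be positive divisors of $n$ with $\gcd(r_1,r_2)=1$. Let $\alpha=ab$ with $a\in\mathbb{F}_{q^{r_1}}^*$ and $b\in\mathbb{F}_{q^{r_2}}^*$, and consider in $\mathrm{PG}(1,q^n)$ \[L_{r_1}=\{\langle (x,\mathrm{Tr}_{q^n/q^{r_1}}(x))\rangle_{\mathbb{F}_{q^n}}\colon x\in\mathbb{F}_{q^n}^*\},\qquad L_{r_2}=\{\langle (x,\alpha\,\mathrm{Tr}_{q^n/q^{r_2}}(x))\rangle_{\mathbb{F}_{q^n}}\colon x\in\mathbb{F}_{q^n}^*\},\] with common head $H=\langle(1,0)\rangle_{\mathbb{F}_{q^n}}$. Then $L_{r_1}$ and $L_{r_2}$ share at least one point other than $H$ if and only if there exist $\gamma_1,\gamma_2\in\mathbb{F}_{q^n}$ such that $\mathrm{Tr}_{q^n/q^{r_1}}(\gamma_1)=\mathrm{Tr}_{q^n/q^{r_2}}(\gamma_2)=1$ and $\mathrm{Tr}_{q^n/q}\!\left(a\gamma_1-\frac{\gamma_2}{b}\right)=0$.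
   Context: For a divisor $r$ of $n$, $\mathrm{Tr}_{q^n/q^r}(x)=\sum_{i=0}^{n/r-1}x^{q^{ir}}$. *)

theory Defs
  imports "HOL-Computational_Algebra.Primes"
begin

text \<open>The ambient field is a finite field type 'a with CARD('a) = q^n, i.e. F_{q^n}.
  The subfield F_{q^r} (r dividing n) is the set of fixed points of x |-> x^(q^r).\<close>

definition subfield_pow :: "nat \<Rightarrow> nat \<Rightarrow> ('a::{field,finite}) set" where
  "subfield_pow q r = {x. x ^ (q ^ r) = x}"

definition trace_rel :: "nat \<Rightarrow> nat \<Rightarrow> nat \<Rightarrow> 'a::{field,finite} \<Rightarrow> 'a" where
  "trace_rel q n r x = (\<Sum>i<n div r. x ^ (q ^ (i * r)))"

text \<open>The point of PG(1,q^n) spanned by a nonzero vector (u,v): its set of nonzero multiples.\<close>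

definition proj_pt :: "'a::field \<times> 'a \<Rightarrow> ('a \<times> 'a) set" where
  "proj_pt w = {(c * fst w, c * snd w) | c. c \<noteq> 0}"

definition prime_power :: "nat \<Rightarrow> bool" where
  "prime_power q \<longleftrightarrow> (\<exists>p k. prime p \<and> k > 0 \<and> q = p ^ k)"

end

theory Submission
  imports Defs "HOL-Computational_Algebra.Polynomial" "HOL-Number_Theory.Residues"
begin

text \<open>
  Write \<open>T\<^sub>i\<close> for the trace onto the subfield of order \<open>q^r\<^sub>i\<close>. Scaling a common point
  \<open>\<langle>(x, T\<^sub>1 x)\<rangle> = \<langle>(y, ab T\<^sub>2 y)\<rangle> \<noteq> H\<close> to second coordinate 1 shows that one exists iff
  there are \<open>\<gamma>\<^sub>1, \<gamma>\<^sub>2\<close> with \<open>T\<^sub>1 \<gamma>\<^sub>1 = T\<^sub>2 \<gamma>\<^sub>2 = 1\<close> and \<open>\<gamma>\<^sub>2 = ab \<gamma>\<^sub>1\<close>, i.e.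
  \<open>a \<gamma>\<^sub>1 - \<gamma>\<^sub>2 / b = 0\<close>. Asking only for \<open>a \<gamma>\<^sub>1 - \<gamma>\<^sub>2 / b\<close> to have absolute trace 0
  loses nothing. By the additive Hilbert 90 such an element is \<open>w^q - w\<close>, and choosing
  \<open>s r\<^sub>1 = t r\<^sub>2 + 1\<close> it splits as \<open>(w^(q^(s r\<^sub>1)) - w) + (w^q - (w^q)^(q^(t r\<^sub>2)))\<close>,
  where the first summand \<open>u\<close> has \<open>T\<^sub>1 u = 0\<close> and the second \<open>v\<close> has \<open>T\<^sub>2 v = 0\<close>.
  Replacing \<open>\<gamma>\<^sub>1, \<gamma>\<^sub>2\<close> by \<open>\<gamma>\<^sub>1 - u / a\<close> and \<open>\<gamma>\<^sub>2 + b v\<close> keeps their traces, as \<open>a\<close> and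
  \<open>b\<close> lie in the respective subfields, and makes the difference vanish.
\<close>

lemma field_power_card_UNIV_eq_same:
  fixes x :: "'a::{field,finite}"
  shows "x ^ card (UNIV :: 'a set) = x"
proof (cases "x = 0")
  case True
  then show ?thesis by (simp add: finite_UNIV_card_ge_0)
next
  case False
  let ?U = "UNIV - {0::'a}"
  have "prod ((*) x) ?U = prod id ?U"
    by (rule prod.reindex_bij_witness[of _ "\<lambda>y. y / x" "(*) x"]) (use False in auto)
  then have "x ^ card ?U * \<Prod>?U = 1 * \<Prod>?U"
    by (simp add: prod.distrib)
  moreover have "\<Prod>?U \<noteq> 0"
    by simp
  ultimately have "x ^ card ?U = 1"
    by (metis mult_cancel_right)
  moreover have "Suc (card ?U) = card (UNIV :: 'a set)"
    by (rule card_Suc_Diff1) simp_all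
  ultimately show ?thesis
    by (metis power_Suc mult_1_right)
qed

lemma card_UNIV_le_card_range_mult:
  fixes f :: "'a::finite \<Rightarrow> 'b"
  assumes "\<And>y. card (f -` {y}) \<le> K"
  shows "card (UNIV :: 'a set) \<le> card (range f) * K"
proof -
  have "UNIV = (\<Union>y\<in>range f. f -` {y})"
    by auto
  then have "card (UNIV :: 'a set) = card (\<Union>y\<in>range f. f -` {y})"
    by simp
  also have "\<dots> \<le> (\<Sum>y\<in>range f. card (f -` {y}))"
    by (rule card_UN_le) simp
  also have "\<dots> \<le> card (range f) * K"
    using sum_bounded_above[of "range f" "\<lambda>y. card (f -` {y})" K] assms by simp
  finally show ?thesis .
qed

lemma card_power_fixed_points_le:
  assumes "q \<ge> 2"
  shows "card {w::'a::field. w ^ q = w} \<le> q"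
proof -
  define p :: "'a poly" where "p = Polynomial.monom 1 q + [:0, -1:]"
  have "degree p = q"
    unfolding p_def using assms by (subst degree_add_eq_left) (auto simp: degree_monom_eq)
  moreover have "{w. w ^ q = w} = {w. poly p w = 0}"
    unfolding p_def by (auto simp: poly_monom)
  ultimately show ?thesis
    using card_poly_roots_bound[of p] assms by fastforce
qed

lemma trace_rel_1_eq: "trace_rel q n 1 x = (\<Sum>i<n. x ^ (q ^ i))"
  by (simp add: trace_rel_def)

lemma card_trace_rel_1_kernel_le:
  assumes "q \<ge> 2" "n \<ge> 1"
  shows "card {w::'a::{field,finite}. trace_rel q n 1 w = 0} \<le> q ^ (n - 1)"
proof -
  define p :: "'a poly" where "p = (\<Sum>i<n. Polynomial.monom 1 (q ^ i))"
  have "degree p \<le> q ^ (n - 1)"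
    unfolding p_def using assms
    by (intro degree_sum_le) (auto simp: degree_monom_eq intro: power_increasing)
  moreover have "Polynomial.coeff p (q ^ (n - 1)) = 1"
  proof -
    have "q ^ i = q ^ (n - 1) \<longleftrightarrow> i = n - 1" for i
      using assms by (intro power_inject_exp) auto
    then have "Polynomial.coeff p (q ^ (n - 1)) = (\<Sum>i<n. if i = n - 1 then 1 else 0)"
      unfolding p_def coeff_sum coeff_monom by presburger
    then show ?thesis using assms by simp
  qed
  moreover have "{w. trace_rel q n 1 w = 0} = {w. poly p w = 0}"
    unfolding p_def trace_rel_1_eq by (simp add: poly_sum poly_monom)
  ultimately show ?thesis
    using card_poly_roots_bound[of p] by fastforce
qed

lemma power_power_power_add: "(x ^ (q ^ i)) ^ (q ^ j) = (x :: 'a::monoid_mult) ^ (q ^ (i + j))"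
  by (simp add: power_add power_mult)

lemma subfield_pow_power_mult:
  assumes "l \<in> subfield_pow q r"
  shows "l ^ (q ^ (i * r)) = l"
proof (induction i)
  case (Suc i)
  have "l ^ (q ^ (Suc i * r)) = (l ^ (q ^ (i * r))) ^ (q ^ r)"
    by (simp add: power_power_power_add add.commute)
  with Suc assms show ?case by (simp add: subfield_pow_def)
qed simp

lemma inverse_mem_subfield_pow:
  "l \<in> subfield_pow q r \<Longrightarrow> inverse l \<in> subfield_pow q r"
  by (simp add: subfield_pow_def power_inverse)

lemma trace_rel_mult_subfield:
  assumes "l \<in> subfield_pow q r"
  shows "trace_rel q n r (l * x) = l * trace_rel q n r x"
  unfolding trace_rel_def
  by (simp add: power_mult_distrib subfield_pow_power_mult[OF assms] sum_distrib_left)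

lemma proj_pt_mult:
  fixes x y :: "'a::field"
  assumes "c \<noteq> 0"
  shows "proj_pt (c * x, c * y) = proj_pt (x, y)"
  unfolding proj_pt_def fst_conv snd_conv
proof (intro Collect_cong iffI; elim exE conjE)
  fix v d assume "v = (d * (c * x), d * (c * y))" "d \<noteq> 0"
  then show "\<exists>d'. v = (d' * x, d' * y) \<and> d' \<noteq> 0"
    using assms by (intro exI[of _ "d * c"]) auto
next
  fix v d assume "v = (d * x, d * y)" "d \<noteq> 0"
  then show "\<exists>d'. v = (d' * (c * x), d' * (c * y)) \<and> d' \<noteq> 0"
    using assms by (intro exI[of _ "d / c"]) auto
qed

lemma proj_pt_eqD:
  assumes "proj_pt v = proj_pt (w :: 'a::field \<times> 'a)"
  obtains c where "c \<noteq> 0" "fst w = c * fst v" "snd w = c * snd v"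
proof -
  have "w \<in> proj_pt v"
    unfolding assms by (auto simp: proj_pt_def intro!: exI[of _ 1])
  with that show ?thesis by (auto simp: proj_pt_def)
qed

lemma proj_pt_eq_head_iff:
  fixes x y :: "'a::field"
  assumes "x \<noteq> 0"
  shows "proj_pt (x, y) = proj_pt (1, 0) \<longleftrightarrow> y = 0"
proof
  assume "proj_pt (x, y) = proj_pt (1, 0)"
  then show "y = 0" by (elim proj_pt_eqD) auto
next
  assume "y = 0"
  then show "proj_pt (x, y) = proj_pt (1, 0)"
    using proj_pt_mult[OF assms, of 1 0] by simp
qed

lemma linear_sets_common_point_iff:
  fixes f g :: "'a::field \<Rightarrow> 'a"
  assumes f_normalise: "\<And>x. f x \<noteq> 0 \<Longrightarrow> f (x / f x) = 1" and "f 0 = 0"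
    and g_normalise: "\<And>x. g x \<noteq> 0 \<Longrightarrow> g (x / g x) = 1" and "g 0 = 0"
    and "c \<noteq> 0"
  shows "(\<exists>P. P \<in> {proj_pt (x, f x) | x. x \<noteq> 0} \<and> P \<in> {proj_pt (x, c * g x) | x. x \<noteq> 0}
              \<and> P \<noteq> proj_pt (1, 0))
     \<longleftrightarrow> (\<exists>\<gamma>1 \<gamma>2. f \<gamma>1 = 1 \<and> g \<gamma>2 = 1 \<and> \<gamma>2 = c * \<gamma>1)"
proof
  assume "\<exists>P. P \<in> {proj_pt (x, f x) | x. x \<noteq> 0} \<and> P \<in> {proj_pt (x, c * g x) | x. x \<noteq> 0}
              \<and> P \<noteq> proj_pt (1, 0)"
  then obtain x y where "x \<noteq> 0" "y \<noteq> 0"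
    and eq: "proj_pt (x, f x) = proj_pt (y, c * g y)" and "proj_pt (x, f x) \<noteq> proj_pt (1, 0)"
    by auto
  then have fx: "f x \<noteq> 0"
    using proj_pt_eq_head_iff by blast
  from eq obtain d where "d \<noteq> 0" and y: "y = d * x" and gy: "c * g y = d * f x"
    by (elim proj_pt_eqD) auto
  then have "g y \<noteq> 0" using fx by auto
  then have "y / g y = c * (x / f x)"
    using gy fx unfolding y by (simp add: field_simps)
  then show "\<exists>\<gamma>1 \<gamma>2. f \<gamma>1 = 1 \<and> g \<gamma>2 = 1 \<and> \<gamma>2 = c * \<gamma>1"
    using f_normalise[OF fx] g_normalise[OF \<open>g y \<noteq> 0\<close>] by blast
next
  assume "\<exists>\<gamma>1 \<gamma>2. f \<gamma>1 = 1 \<and> g \<gamma>2 = 1 \<and> \<gamma>2 = c * \<gamma>1"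
  then obtain \<gamma>1 \<gamma>2 where f1: "f \<gamma>1 = 1" and g1: "g \<gamma>2 = 1" and \<gamma>2: "\<gamma>2 = c * \<gamma>1"
    by blast
  have "\<gamma>1 \<noteq> 0" "\<gamma>2 \<noteq> 0"
    using f1 g1 \<open>f 0 = 0\<close> \<open>g 0 = 0\<close> by auto
  moreover have "proj_pt (\<gamma>2, c * g \<gamma>2) = proj_pt (\<gamma>1, f \<gamma>1)"
    using proj_pt_mult[OF \<open>c \<noteq> 0\<close>, of \<gamma>1 1] by (simp only: g1 f1 \<gamma>2[symmetric] mult_1_right)
  moreover have "proj_pt (\<gamma>1, f \<gamma>1) \<noteq> proj_pt (1, 0)"
    using proj_pt_eq_head_iff[OF \<open>\<gamma>1 \<noteq> 0\<close>] f1 by simp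
  ultimately show "\<exists>P. P \<in> {proj_pt (x, f x) | x. x \<noteq> 0} \<and> P \<in> {proj_pt (x, c * g x) | x. x \<noteq> 0}
              \<and> P \<noteq> proj_pt (1, 0)"
    by blast
qed

context
  fixes q n :: nat
  assumes prime_power_q: "prime_power q"
    and card_UNIV: "card (UNIV :: 'a::{field,finite} set) = q ^ n"
begin

lemma frobenius_add: "(x + y) ^ q = x ^ q + y ^ q" for x y :: 'a
proof -
  obtain p k where p: "prime p" "k > 0" "q = p ^ k"
    using prime_power_q unfolding prime_power_def by auto
  have "prime CHAR('a)"
    by (simp add: prime_CHAR_semidom finite_imp_CHAR_pos)
  moreover have "CHAR('a) dvd p ^ (k * n)"
    using CHAR_dvd_CARD[where 'a='a] card_UNIV p by (simp add: power_mult)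
  ultimately have "CHAR('a) = p"
    using p(1) prime_dvd_power primes_dvd_imp_eq by blast
  then show ?thesis
    using freshmans_dream'[OF \<open>prime CHAR('a)\<close>, of q k] p by simp
qed

lemma power_q_n_eq_same: "x ^ (q ^ n) = (x :: 'a)"
  using field_power_card_UNIV_eq_same[of x] by (simp add: card_UNIV)

lemma q_ge_2: "q \<ge> 2"
proof -
  obtain p k where "prime p" "k > 0" "q = p ^ k"
    using prime_power_q unfolding prime_power_def by auto
  moreover from \<open>prime p\<close> have "p \<ge> 2"
    by (rule prime_ge_2_nat)
  ultimately show ?thesis
    using self_le_power[of p k] by simp
qed

lemma n_ge_1: "n \<ge> 1"
proof -
  have "card {0, 1 :: 'a} \<le> card (UNIV :: 'a set)"
    by (rule card_mono) auto
  then have "2 \<le> q ^ n"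
    by (simp add: card_UNIV)
  then show ?thesis
    by (cases n) auto
qed

lemma power_q_power_add: "(x + y) ^ (q ^ k) = x ^ (q ^ k) + (y :: 'a) ^ (q ^ k)"
proof (induction k arbitrary: x y)
  case (Suc k)
  then show ?case by (simp add: power_Suc2 power_mult frobenius_add)
qed simp

lemma power_q_power_diff: "(x - y) ^ (q ^ k) = x ^ (q ^ k) - (y :: 'a) ^ (q ^ k)"
  using power_q_power_add[of "x - y" y k] by (simp add: eq_diff_eq)

lemma power_q_power_sum: "(\<Sum>i\<in>A. f i) ^ (q ^ k) = (\<Sum>i\<in>A. (f i :: 'a) ^ (q ^ k))"
  by (induction A rule: infinite_finite_induct) (use q_ge_2 in \<open>simp_all add: power_q_power_add\<close>)

lemma trace_rel_add: "trace_rel q n r (x + y) = trace_rel q n r x + trace_rel q n r (y :: 'a)"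
  unfolding trace_rel_def by (simp add: power_q_power_add sum.distrib)

lemma trace_rel_diff: "trace_rel q n r (x - y) = trace_rel q n r x - trace_rel q n r (y :: 'a)"
  unfolding trace_rel_def by (simp add: power_q_power_diff sum_subtractf)

lemma trace_rel_zero: "trace_rel q n r (0 :: 'a) = 0"
  using trace_rel_diff[of r 0 0] by simp

lemma trace_rel_power_q_power:
  assumes "r dvd n" "r > 0"
  shows "trace_rel q n r ((x :: 'a) ^ (q ^ r)) = trace_rel q n r x"
proof -
  define g where "g i = x ^ (q ^ (i * r))" for i
  have "g (n div r) = g 0"
    using assms by (simp add: g_def power_q_n_eq_same)
  have "trace_rel q n r (x ^ (q ^ r)) = (\<Sum>i<n div r. g (Suc i))"
    unfolding trace_rel_def g_def by (simp add: power_power_power_add)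
  also have "\<dots> = (\<Sum>i<n div r. g i)"
  proof -
    have "g 0 + (\<Sum>i<n div r. g (Suc i)) = (\<Sum>i<n div r. g i) + g (n div r)"
      by (simp only: sum.lessThan_Suc_shift[symmetric] sum.lessThan_Suc)
    with \<open>g (n div r) = g 0\<close> show ?thesis by (simp add: add.commute)
  qed
  finally show ?thesis by (simp add: trace_rel_def g_def)
qed

lemma trace_rel_power_q_power_mult:
  assumes "r dvd n" "r > 0"
  shows "trace_rel q n r ((x :: 'a) ^ (q ^ (s * r))) = trace_rel q n r x"
proof (induction s)
  case (Suc s)
  have "x ^ (q ^ (Suc s * r)) = (x ^ (q ^ (s * r))) ^ (q ^ r)"
    by (simp add: power_power_power_add add.commute)
  with Suc show ?case by (simp add: trace_rel_power_q_power[OF assms])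
qed simp

lemma trace_rel_mem_subfield_pow:
  assumes "r dvd n" "r > 0"
  shows "trace_rel q n r (x :: 'a) \<in> subfield_pow q r"
proof -
  have "trace_rel q n r x ^ (q ^ r) = trace_rel q n r (x ^ (q ^ r))"
    unfolding trace_rel_def by (simp add: power_q_power_sum power_power_power_add add.commute)
  then show ?thesis
    by (simp add: subfield_pow_def trace_rel_power_q_power[OF assms])
qed

lemma trace_rel_normalise:
  assumes "r dvd n" "r > 0" "trace_rel q n r x \<noteq> 0"
  shows "trace_rel q n r ((x :: 'a) / trace_rel q n r x) = 1"
proof -
  have "inverse (trace_rel q n r x) \<in> subfield_pow q r"
    by (rule inverse_mem_subfield_pow[OF trace_rel_mem_subfield_pow[OF assms(1,2)]])
  from trace_rel_mult_subfield[OF this, of n x] show ?thesis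
    using assms(3) by (simp add: divide_inverse_commute)
qed

text \<open>
  Additive Hilbert 90, by counting: the additive map \<open>w \<mapsto> w^q - w\<close> has fibres of size at
  most \<open>q\<close>, so its image, which lies in the trace kernel, has at least \<open>q^(n-1)\<close> elements,
  while the kernel has at most \<open>q^(n-1)\<close> as the root set of a polynomial of that degree.
\<close>

lemma trace_rel_1_eq_0_iff: "trace_rel q n 1 z = 0 \<longleftrightarrow> (\<exists>w. z = w ^ q - (w :: 'a))"
proof -
  define f where "f w = w ^ q - w" for w :: 'a
  define K where "K = {z :: 'a. trace_rel q n 1 z = 0}"
  have f_diff: "f x - f y = f (x - y)" for x y
    using power_q_power_diff[of x y 1] by (simp add: f_def)
  have "range f \<subseteq> K"
    using trace_rel_power_q_power[of 1] by (auto simp: K_def f_def trace_rel_diff)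
  have "card (f -` {y}) \<le> q" for y
  proof (cases "y \<in> range f")
    case True
    then obtain w0 where y: "y = f w0" by auto
    have "f -` {y} \<subseteq> (+) w0 ` {w. w ^ q = w}"
    proof
      fix x assume "x \<in> f -` {y}"
      then have "(x - w0) ^ q = x - w0"
        using f_diff[of x w0] y by (simp add: f_def)
      then show "x \<in> (+) w0 ` {w. w ^ q = w}"
        by (intro image_eqI[of _ _ "x - w0"]) auto
    qed
    then have "card (f -` {y}) \<le> card ((+) w0 ` {w :: 'a. w ^ q = w})"
      by (intro card_mono) auto
    also have "\<dots> \<le> q"
      using card_image_le[of _ "(+) w0"] card_power_fixed_points_le[OF q_ge_2, where 'a='a]
      by (meson finite le_trans)
    finally show ?thesis .
  next
    case False
    then have "f -` {y} = {}" by auto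
    then show ?thesis by simp
  qed
  then have "q ^ n \<le> card (range f) * q"
    using card_UNIV_le_card_range_mult[of f q] by (simp add: card_UNIV)
  moreover have "q ^ n = q ^ (n - 1) * q"
    using n_ge_1 by (simp add: power_eq_if)
  ultimately have "q ^ (n - 1) \<le> card (range f)"
    using q_ge_2 by simp
  then have "card K \<le> card (range f)"
    using card_trace_rel_1_kernel_le[OF q_ge_2 n_ge_1, where 'a='a] by (simp add: K_def)
  moreover have "card (range f) \<le> card K"
    using \<open>range f \<subseteq> K\<close> by (intro card_mono) auto
  ultimately have "range f = K"
    using \<open>range f \<subseteq> K\<close> by (intro card_subset_eq) auto
  then show ?thesis
    by (auto simp: K_def f_def)
qed

lemma trace_rel_1_eq_0_split:
  assumes "r1 dvd n" "r1 > 0" "r2 dvd n" "r2 > 0" "coprime r1 r2"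
    and "trace_rel q n 1 z = 0"
  obtains u v where "z = u + (v :: 'a)" "trace_rel q n r1 u = 0" "trace_rel q n r2 v = 0"
proof -
  obtain w where w: "z = w ^ q - w"
    using trace_rel_1_eq_0_iff assms(6) by blast
  obtain s t where st: "r1 * s = r2 * t + 1"
    using bezout_nat[of r1 r2] assms(2,5) by auto
  have "w ^ (q ^ (s * r1)) = (w ^ q) ^ (q ^ (t * r2))"
    using st by (simp add: power_add power_mult[symmetric] mult.commute)
  then have "z = (w ^ (q ^ (s * r1)) - w) + (w ^ q - (w ^ q) ^ (q ^ (t * r2)))"
    using w by simp
  moreover have "trace_rel q n r1 (w ^ (q ^ (s * r1)) - w) = 0"
    using assms(1,2) by (simp add: trace_rel_diff trace_rel_power_q_power_mult)
  moreover have "trace_rel q n r2 (w ^ q - (w ^ q) ^ (q ^ (t * r2))) = 0"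
    using assms(3,4) by (simp add: trace_rel_diff trace_rel_power_q_power_mult)
  ultimately show thesis by (rule that)
qed

lemma exists_trace_rel_eq_1_proportional_iff:
  assumes r1: "r1 dvd n" "r1 > 0" and r2: "r2 dvd n" "r2 > 0" and "coprime r1 r2"
    and a: "a \<in> subfield_pow q r1" "a \<noteq> 0" and b: "b \<in> subfield_pow q r2" "b \<noteq> 0"
  shows "(\<exists>\<gamma>1 \<gamma>2. trace_rel q n r1 \<gamma>1 = 1 \<and> trace_rel q n r2 \<gamma>2 = 1 \<and> \<gamma>2 = (a * b) * \<gamma>1)
     \<longleftrightarrow> (\<exists>\<gamma>1 \<gamma>2. trace_rel q n r1 \<gamma>1 = 1 \<and> trace_rel q n r2 \<gamma>2 = 1
              \<and> trace_rel q n 1 (a * \<gamma>1 - \<gamma>2 / b) = (0 :: 'a))"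
proof
  assume "\<exists>\<gamma>1 \<gamma>2. trace_rel q n r1 \<gamma>1 = 1 \<and> trace_rel q n r2 \<gamma>2 = 1 \<and> \<gamma>2 = (a * b) * \<gamma>1"
  then show "\<exists>\<gamma>1 \<gamma>2. trace_rel q n r1 \<gamma>1 = 1 \<and> trace_rel q n r2 \<gamma>2 = 1
              \<and> trace_rel q n 1 (a * \<gamma>1 - \<gamma>2 / b) = 0"
  proof (elim exE conjE, intro exI conjI)
    fix \<gamma>1 \<gamma>2 assume "\<gamma>2 = (a * b) * \<gamma>1"
    then have "a * \<gamma>1 - \<gamma>2 / b = 0"
      using \<open>b \<noteq> 0\<close> by simp
    then show "trace_rel q n 1 (a * \<gamma>1 - \<gamma>2 / b) = 0"
      by (simp add: trace_rel_zero)
  qed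
next
  assume "\<exists>\<gamma>1 \<gamma>2. trace_rel q n r1 \<gamma>1 = 1 \<and> trace_rel q n r2 \<gamma>2 = 1
              \<and> trace_rel q n 1 (a * \<gamma>1 - \<gamma>2 / b) = 0"
  then obtain \<gamma>1 \<gamma>2 where \<gamma>1: "trace_rel q n r1 \<gamma>1 = 1" and \<gamma>2: "trace_rel q n r2 \<gamma>2 = 1"
    and tz: "trace_rel q n 1 (a * \<gamma>1 - \<gamma>2 / b) = 0"
    by blast
  from tz obtain u v where uv: "a * \<gamma>1 - \<gamma>2 / b = u + v"
    and u: "trace_rel q n r1 u = 0" and v: "trace_rel q n r2 v = 0"
    by (rule trace_rel_1_eq_0_split[OF r1 r2 \<open>coprime r1 r2\<close>])
  have "trace_rel q n r1 (\<gamma>1 - inverse a * u) = 1"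
    using trace_rel_mult_subfield[OF inverse_mem_subfield_pow[OF a(1)]] by (simp add: trace_rel_diff \<gamma>1 u)
  moreover have "trace_rel q n r2 (\<gamma>2 + b * v) = 1"
    using trace_rel_mult_subfield[OF b(1)] by (simp add: trace_rel_add \<gamma>2 v)
  moreover have "\<gamma>2 + b * v = (a * b) * (\<gamma>1 - inverse a * u)"
    using uv a(2) b(2) by (simp add: field_simps)
  ultimately show "\<exists>\<gamma>1 \<gamma>2. trace_rel q n r1 \<gamma>1 = 1 \<and> trace_rel q n r2 \<gamma>2 = 1 \<and> \<gamma>2 = (a * b) * \<gamma>1"
    by blast
qed

end

theorem theorem3p4:
  fixes q n r1 r2 :: nat and a b :: "'a::{field,finite}"
  assumes "prime_power q"
    and "card (UNIV :: 'a set) = q ^ n"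
    and "n \<ge> 2"
    and "r1 > 0" and "r2 > 0" and "r1 dvd n" and "r2 dvd n"
    and "gcd r1 r2 = 1"
    and "a \<in> subfield_pow q r1" and "a \<noteq> 0"
    and "b \<in> subfield_pow q r2" and "b \<noteq> 0"
  shows "(\<exists>P. P \<in> {proj_pt (x, trace_rel q n r1 x) | x. x \<noteq> 0}
              \<and> P \<in> {proj_pt (x, (a * b) * trace_rel q n r2 x) | x. x \<noteq> 0}
              \<and> P \<noteq> proj_pt (1, 0))
     \<longleftrightarrow> (\<exists>\<gamma>1 \<gamma>2. trace_rel q n r1 \<gamma>1 = 1 \<and> trace_rel q n r2 \<gamma>2 = 1
              \<and> trace_rel q n 1 (a * \<gamma>1 - \<gamma>2 / b) = 0)"
proof -
  have "coprime r1 r2"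
    using assms(8) by (simp add: coprime_iff_gcd_eq_1)
  have "(\<exists>P. P \<in> {proj_pt (x, trace_rel q n r1 x) | x. x \<noteq> 0}
              \<and> P \<in> {proj_pt (x, (a * b) * trace_rel q n r2 x) | x. x \<noteq> 0}
              \<and> P \<noteq> proj_pt (1, 0))
     \<longleftrightarrow> (\<exists>\<gamma>1 \<gamma>2. trace_rel q n r1 \<gamma>1 = 1 \<and> trace_rel q n r2 \<gamma>2 = 1 \<and> \<gamma>2 = (a * b) * \<gamma>1)"
    using assms(4-7,10,12)
    by (intro linear_sets_common_point_iff trace_rel_normalise[OF assms(1,2)] trace_rel_zero[OF assms(1,2)])
      auto
  also have "\<dots> \<longleftrightarrow> (\<exists>\<gamma>1 \<gamma>2. trace_rel q n r1 \<gamma>1 = 1 \<and> trace_rel q n r2 \<gamma>2 = 1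
              \<and> trace_rel q n 1 (a * \<gamma>1 - \<gamma>2 / b) = 0)"
    using assms(1,2,4-7,9-12) \<open>coprime r1 r2\<close> by (intro exists_trace_rel_eq_1_proportional_iff)
  finally show ?thesis .
qed

end
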